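(* Let $(\mathcal{L},[\cdot,\cdot,\cdot]_{\mathcal{L}},\mathbf{1})$ be a central (right) $3$-Leibniz algebra over a field $\mathbb{K}$. Then $(\mathcal{L}\otimes\mathcal{L},\{\cdot,\cdot\},\mathbf{1}\otimes\mathbf{1})$ is a central Leibniz algebra, where $\{x_1\otimes x_2,y_1\otimes y_2\}=[x_1,y_1,y_2]_{\mathcal{L}}\otimes x_2+x_1\otimes[x_2,y_1,y_2]_{\mathcal{L}}$. Consequently, the linear map $R$ on $(\mathcal{L}\otimes\mathcal{L})^{\otimes2}$ given by $R((x_1\otimes x_2)\otimes(y_1\otimes y_2))=(y_1\otimes y_2)\otimes(x_1\otimes x_2)+(\mathbf{1}\otimes\mathbf{1})\otimes([x_1,y_1,y_2]_{\mathcal{L}}\otimes x_2)+(\mathbf{1}\otimes\mathbf{1})\otimes(x_1\otimes[x_2,y_1,y_2]_{\mathcal{L}})$ is a solution of the Yang-Baxter equation.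
   Context: A (right) $3$-Leibniz algebra is a vector space $\mathcal{L}$ with a trilinear map $[\cdot,\cdot,\cdot]_{\mathcal{L}}$ such that $[[x_1,x_2,x_3]_{\mathcal{L}},y_1,y_2]_{\mathcal{L}}=[[x_1,y_1,y_2]_{\mathcal{L}},x_2,x_3]_{\mathcal{L}}+[x_1,[x_2,y_1,y_2]_{\mathcal{L}},x_3]_{\mathcal{L}}+[x_1,x_2,[x_3,y_1,y_2]_{\mathcal{L}}]_{\mathcal{L}}$. It is central with central element $\mathbf{1}\in\mathcal{L}$ if $[\mathbf{1},x,y]_{\mathcal{L}}=[x,\mathbf{1},y]_{\mathcal{L}}=[x,y,\mathbf{1}]_{\mathcal{L}}=0$ for all $x,y$. A central Leibniz algebra is a Leibniz algebra ($[[x,y],z]=[[x,z],y]+[x,[y,z]]$) with an element $\mathbf{1}$ such that $[\mathbf{1},x]=0=[x,\mathbf{1}]$ for all $x$. A solution of the Yang-Baxter equation on $V$ is an invertible linear $R:V\otimes V\to V\otimes V$ with $(R\otimes\mathrm{Id})(\mathrm{Id}\otimes R)(R\otimes\mathrm{Id})=(\mathrm{Id}\otimes R)(R\otimes\mathrm{Id})(\mathrm{Id}\otimes R)$. *)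

theory Defs
  imports "HOL-Library.Poly_Mapping"
begin

text \<open>Vector spaces over a field 'k are modelled as free vector spaces
  'a \<Rightarrow>_0 'k (finitely supported coefficient functions on a basis 'a).
  The tensor product of 'a \<Rightarrow>_0 'k and 'b \<Rightarrow>_0 'k is ('a \<times> 'b) \<Rightarrow>_0 'k.\<close>

definition smult :: "'k::field \<Rightarrow> ('a \<Rightarrow>\<^sub>0 'k) \<Rightarrow> ('a \<Rightarrow>\<^sub>0 'k)" where
  "smult c v = Poly_Mapping.map (\<lambda>x. c * x) v"

definition tensor :: "('a \<Rightarrow>\<^sub>0 'k::field) \<Rightarrow> ('b \<Rightarrow>\<^sub>0 'k) \<Rightarrow> (('a \<times> 'b) \<Rightarrow>\<^sub>0 'k)" where
  "tensor x y = (\<Sum>i\<in>Poly_Mapping.keys x. \<Sum>j\<in>Poly_Mapping.keys y. Poly_Mapping.single (i, j) (Poly_Mapping.lookup x i * Poly_Mapping.lookup y j))"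

definition lin_map :: "(('a \<Rightarrow>\<^sub>0 'k::field) \<Rightarrow> ('b \<Rightarrow>\<^sub>0 'k)) \<Rightarrow> bool" where
  "lin_map f \<longleftrightarrow> (\<forall>x y. f (x + y) = f x + f y) \<and> (\<forall>c x. f (smult c x) = smult c (f x))"

definition bilin_map :: "(('a \<Rightarrow>\<^sub>0 'k::field) \<Rightarrow> ('b \<Rightarrow>\<^sub>0 'k) \<Rightarrow> ('c \<Rightarrow>\<^sub>0 'k)) \<Rightarrow> bool" where
  "bilin_map f \<longleftrightarrow> (\<forall>x. lin_map (\<lambda>y. f x y)) \<and> (\<forall>y. lin_map (\<lambda>x. f x y))"

definition trilin_map ::
  "(('a \<Rightarrow>\<^sub>0 'k::field) \<Rightarrow> ('a \<Rightarrow>\<^sub>0 'k) \<Rightarrow> ('a \<Rightarrow>\<^sub>0 'k) \<Rightarrow> ('a \<Rightarrow>\<^sub>0 'k)) \<Rightarrow> bool" where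
  "trilin_map f \<longleftrightarrow> (\<forall>y z. lin_map (\<lambda>x. f x y z)) \<and> (\<forall>x z. lin_map (\<lambda>y. f x y z))
     \<and> (\<forall>x y. lin_map (\<lambda>z. f x y z))"

definition central_3leibniz ::
  "(('a \<Rightarrow>\<^sub>0 'k::field) \<Rightarrow> ('a \<Rightarrow>\<^sub>0 'k) \<Rightarrow> ('a \<Rightarrow>\<^sub>0 'k) \<Rightarrow> ('a \<Rightarrow>\<^sub>0 'k))
   \<Rightarrow> ('a \<Rightarrow>\<^sub>0 'k) \<Rightarrow> bool" where
  "central_3leibniz T one \<longleftrightarrow> trilin_map T
     \<and> (\<forall>x1 x2 x3 y1 y2. T (T x1 x2 x3) y1 y2
          = T (T x1 y1 y2) x2 x3 + T x1 (T x2 y1 y2) x3 + T x1 x2 (T x3 y1 y2))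
     \<and> (\<forall>x y. T one x y = 0 \<and> T x one y = 0 \<and> T x y one = 0)"

definition central_leibniz ::
  "(('a \<Rightarrow>\<^sub>0 'k::field) \<Rightarrow> ('a \<Rightarrow>\<^sub>0 'k) \<Rightarrow> ('a \<Rightarrow>\<^sub>0 'k)) \<Rightarrow> ('a \<Rightarrow>\<^sub>0 'k) \<Rightarrow> bool" where
  "central_leibniz B one \<longleftrightarrow> bilin_map B
     \<and> (\<forall>x y z. B (B x y) z = B (B x z) y + B x (B y z))
     \<and> (\<forall>x. B one x = 0 \<and> B x one = 0)"

text \<open>R \<otimes> Id and Id \<otimes> R on V \<otimes> V \<otimes> V, where V = 'b \<Rightarrow>_0 'k and
  V \<otimes> V \<otimes> V = ('b \<times> 'b \<times> 'b) \<Rightarrow>_0 'k, defined on basis tensors and extended linearly.\<close>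
definition reindex :: "('a \<Rightarrow> 'b) \<Rightarrow> ('a \<Rightarrow>\<^sub>0 'k::field) \<Rightarrow> ('b \<Rightarrow>\<^sub>0 'k)" where
  "reindex g v = (\<Sum>i\<in>Poly_Mapping.keys v. Poly_Mapping.single (g i) (Poly_Mapping.lookup v i))"

definition R_Id ::
  "(('b \<times> 'b \<Rightarrow>\<^sub>0 'k::field) \<Rightarrow> ('b \<times> 'b \<Rightarrow>\<^sub>0 'k)) \<Rightarrow> ('b \<times> 'b \<times> 'b \<Rightarrow>\<^sub>0 'k) \<Rightarrow> ('b \<times> 'b \<times> 'b \<Rightarrow>\<^sub>0 'k)" where
  "R_Id R w = (\<Sum>t\<in>Poly_Mapping.keys w. case t of (p, q, r) \<Rightarrow>
      smult (Poly_Mapping.lookup w t) (reindex (\<lambda>((a, b), c). (a, b, c))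
         (tensor (R (Poly_Mapping.single (p, q) 1)) (Poly_Mapping.single r 1))))"

definition Id_R ::
  "(('b \<times> 'b \<Rightarrow>\<^sub>0 'k::field) \<Rightarrow> ('b \<times> 'b \<Rightarrow>\<^sub>0 'k)) \<Rightarrow> ('b \<times> 'b \<times> 'b \<Rightarrow>\<^sub>0 'k) \<Rightarrow> ('b \<times> 'b \<times> 'b \<Rightarrow>\<^sub>0 'k)" where
  "Id_R R w = (\<Sum>t\<in>Poly_Mapping.keys w. case t of (p, q, r) \<Rightarrow>
      smult (Poly_Mapping.lookup w t) (tensor (Poly_Mapping.single p 1) (R (Poly_Mapping.single (q, r) 1))))"

definition YBE_solution ::
  "(('b \<times> 'b \<Rightarrow>\<^sub>0 'k::field) \<Rightarrow> ('b \<times> 'b \<Rightarrow>\<^sub>0 'k)) \<Rightarrow> bool" where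
  "YBE_solution R \<longleftrightarrow> lin_map R \<and> bij R
     \<and> R_Id R \<circ> Id_R R \<circ> R_Id R = Id_R R \<circ> R_Id R \<circ> Id_R R"

end

theory Submission
  imports Defs
begin

text \<open>On pure tensors the bracket is the action of the operators [-, y1, y2] as derivations of
  the product x1 \<otimes> x2; the 3-Leibniz identity in each factor then gives the Leibniz identity
  of {-, -}, the mixed terms matching in pairs, and centrality of \<one> \<otimes> \<one> follows from
  that of \<one>. Both identities extend from pure tensors by multilinearity.

  For any central Leibniz algebra (V, B, e), the map R(u \<otimes> v) = v \<otimes> u + e \<otimes> B(u, v) is a
  braiding: applied to x \<otimes> y \<otimes> z, centrality of e kills all but one correction term on each
  side of the braid relation, and these two terms, e \<otimes> e \<otimes> B(B(x, y), z) and
  e \<otimes> e \<otimes> (B(B(x, z), y) + B(x, B(y, z))), agree by the Leibniz identity. Its inverse is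
  u \<otimes> v \<mapsto> v \<otimes> u - B(v, u) \<otimes> e.\<close>

lemma lookup_smult [simp]: "Poly_Mapping.lookup (smult c v) k = c * Poly_Mapping.lookup v k"
  unfolding smult_def by (simp add: Poly_Mapping.map.rep_eq when_def)

lemma smult_add_left: "smult (c + d) x = smult c x + smult d x"
  by (rule poly_mapping_eqI) (simp add: lookup_add algebra_simps)

lemma smult_add_right: "smult c (x + y) = smult c x + smult c y"
  by (rule poly_mapping_eqI) (simp add: lookup_add algebra_simps)

lemma smult_diff_right: "smult c (x - y) = smult c x - smult c y"
  by (rule poly_mapping_eqI) (simp add: lookup_minus algebra_simps)

lemma smult_smult: "smult c (smult d x) = smult (c * d) x"
  by (rule poly_mapping_eqI) simp

lemma smult_zero [simp]: "smult c 0 = 0" "smult 0 x = 0"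
  by (rule poly_mapping_eqI, simp)+

lemma smult_one [simp]: "smult 1 x = x"
  by (rule poly_mapping_eqI) simp

lemma smult_sum: "smult c (sum f S) = (\<Sum>i\<in>S. smult c (f i))"
  by (rule poly_mapping_eqI) (simp add: lookup_sum sum_distrib_left)

lemma lin_mapI:
  "(\<And>x y. f (x + y) = f x + f y) \<Longrightarrow> (\<And>c x. f (smult c x) = smult c (f x)) \<Longrightarrow> lin_map f"
  unfolding lin_map_def by blast

lemma lin_map_add: "lin_map f \<Longrightarrow> f (x + y) = f x + f y"
  and lin_map_smult: "lin_map f \<Longrightarrow> f (smult c x) = smult c (f x)"
  unfolding lin_map_def by blast+

lemma lin_map_zero: "lin_map f \<Longrightarrow> f 0 = 0"
  using lin_map_smult[of f 0 0] by simp

lemma lin_map_diff: "lin_map f \<Longrightarrow> f (x - y) = f x - f y"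
  using lin_map_add[of f "x - y" y] by (simp add: algebra_simps)

lemma lin_map_id: "lin_map id"
  by (simp add: lin_map_def)

lemma lin_map_comp: "lin_map f \<Longrightarrow> lin_map g \<Longrightarrow> lin_map (f \<circ> g)"
  by (simp add: lin_map_def)

lemma lin_map_sum: "lin_map f \<Longrightarrow> f (sum g S) = (\<Sum>i\<in>S. f (g i))"
  by (induction S rule: infinite_finite_induct) (simp_all add: lin_map_zero lin_map_add)

definition lin_ext :: "('i \<Rightarrow> ('b \<Rightarrow>\<^sub>0 'k::field)) \<Rightarrow> ('i \<Rightarrow>\<^sub>0 'k) \<Rightarrow> ('b \<Rightarrow>\<^sub>0 'k)" where
  "lin_ext f w = (\<Sum>t\<in>Poly_Mapping.keys w. smult (Poly_Mapping.lookup w t) (f t))"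

lemma lin_ext_superset:
  "finite S \<Longrightarrow> Poly_Mapping.keys w \<subseteq> S \<Longrightarrow> lin_ext f w = (\<Sum>t\<in>S. smult (Poly_Mapping.lookup w t) (f t))"
  unfolding lin_ext_def by (rule sum.mono_neutral_left) (auto simp: in_keys_iff)

lemma lin_map_lin_ext: "lin_map (lin_ext f)"
proof (rule lin_mapI)
  fix x y :: "'a \<Rightarrow>\<^sub>0 'b"
  let ?S = "Poly_Mapping.keys x \<union> Poly_Mapping.keys y"
  have "lin_ext f (x + y) = (\<Sum>t\<in>?S. smult (Poly_Mapping.lookup (x + y) t) (f t))"
    by (rule lin_ext_superset) (simp_all add: keys_add)
  also have "\<dots> = (\<Sum>t\<in>?S. smult (Poly_Mapping.lookup x t) (f t)) + (\<Sum>t\<in>?S. smult (Poly_Mapping.lookup y t) (f t))"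
    by (simp add: lookup_add smult_add_left sum.distrib)
  also have "\<dots> = lin_ext f x + lin_ext f y"
    by (simp add: lin_ext_superset[symmetric])
  finally show "lin_ext f (x + y) = lin_ext f x + lin_ext f y" .
next
  fix c and x :: "'a \<Rightarrow>\<^sub>0 'b"
  have "lin_ext f (smult c x) = (\<Sum>t\<in>Poly_Mapping.keys x. smult (Poly_Mapping.lookup (smult c x) t) (f t))"
    by (rule lin_ext_superset) (auto simp: in_keys_iff)
  also have "\<dots> = smult c (lin_ext f x)"
    unfolding lin_ext_def smult_sum smult_smult by simp
  finally show "lin_ext f (smult c x) = smult c (lin_ext f x)" .
qed

lemma lin_ext_single [simp]: "lin_ext f (Poly_Mapping.single i 1) = f i"
  unfolding lin_ext_def by simp

lemma lin_ext_basis: "lin_ext (\<lambda>i. Poly_Mapping.single i 1) w = w"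
proof (rule poly_mapping_eqI)
  fix k
  have "Poly_Mapping.lookup (lin_ext (\<lambda>i. Poly_Mapping.single i 1) w) k
      = (\<Sum>t\<in>Poly_Mapping.keys w. if t = k then Poly_Mapping.lookup w t else 0)"
    unfolding lin_ext_def lookup_sum by (intro sum.cong) (auto simp: lookup_single)
  also have "\<dots> = Poly_Mapping.lookup w k"
    by (simp add: in_keys_iff)
  finally show "Poly_Mapping.lookup (lin_ext (\<lambda>i. Poly_Mapping.single i 1) w) k = Poly_Mapping.lookup w k" .
qed

lemma lin_ext_of_lin_map:
  assumes "lin_map f"
  shows "lin_ext (\<lambda>i. f (Poly_Mapping.single i 1)) = f"
proof
  fix w
  have "lin_ext (\<lambda>i. f (Poly_Mapping.single i 1)) w = f (lin_ext (\<lambda>i. Poly_Mapping.single i 1) w)"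
    unfolding lin_ext_def lin_map_sum[OF assms] lin_map_smult[OF assms] ..
  then show "lin_ext (\<lambda>i. f (Poly_Mapping.single i 1)) w = f w"
    by (simp only: lin_ext_basis)
qed

lemma lin_map_eqI:
  assumes "lin_map f" "lin_map g" "\<And>i. f (Poly_Mapping.single i 1) = g (Poly_Mapping.single i 1)"
  shows "f = g"
proof -
  have "lin_ext (\<lambda>i. f (Poly_Mapping.single i 1)) = lin_ext (\<lambda>i. g (Poly_Mapping.single i 1))"
    using assms(3) by simp
  then show ?thesis
    by (simp only: lin_ext_of_lin_map assms(1,2))
qed

lemma bilin_mapD:
  assumes "bilin_map F"
  shows "F (x + x') y = F x y + F x' y" "F x (y + y') = F x y + F x y'"
    and "F (smult c x) y = smult c (F x y)" "F x (smult c y) = smult c (F x y)"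
  using assms unfolding bilin_map_def lin_map_def by auto

lemma lookup_tensor [simp]:
  "Poly_Mapping.lookup (tensor x y) k = Poly_Mapping.lookup x (fst k) * Poly_Mapping.lookup y (snd k)"
proof -
  obtain a b where k: "k = (a, b)"
    by fastforce
  have "Poly_Mapping.lookup (tensor x y) (a, b)
      = (\<Sum>i\<in>Poly_Mapping.keys x. if i = a then Poly_Mapping.lookup x i * Poly_Mapping.lookup y b else 0)"
    unfolding tensor_def lookup_sum
    by (intro sum.cong) (auto simp: lookup_single when_def sum.delta in_keys_iff)
  then show ?thesis
    by (simp add: k sum.delta in_keys_iff)
qed

lemma tensor_add_left: "tensor (x + y) z = tensor x z + tensor y z"
  by (rule poly_mapping_eqI) (simp add: lookup_add algebra_simps)

lemma tensor_add_right: "tensor x (y + z) = tensor x y + tensor x z"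
  by (rule poly_mapping_eqI) (simp add: lookup_add algebra_simps)

lemma tensor_diff_left: "tensor (x - y) z = tensor x z - tensor y z"
  by (rule poly_mapping_eqI) (simp add: lookup_minus algebra_simps)

lemma tensor_smult_left: "tensor (smult c x) y = smult c (tensor x y)"
  by (rule poly_mapping_eqI) simp

lemma tensor_smult_right: "tensor x (smult c y) = smult c (tensor x y)"
  by (rule poly_mapping_eqI) simp

lemmas tensor_linear = tensor_add_left tensor_add_right tensor_smult_left tensor_smult_right

lemma tensor_zero [simp]: "tensor 0 y = 0" "tensor x 0 = 0"
  by (rule poly_mapping_eqI, simp)+

lemma single_pair_eq_tensor:
  "Poly_Mapping.single (i, j) 1 = tensor (Poly_Mapping.single i 1) (Poly_Mapping.single j 1)"
  by (rule poly_mapping_eqI) (auto simp: lookup_single when_def)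

lemma bilin_map_eqI:
  assumes "bilin_map F" "bilin_map G"
    and "\<And>i j. F (Poly_Mapping.single i 1) (Poly_Mapping.single j 1)
      = G (Poly_Mapping.single i 1) (Poly_Mapping.single j 1)"
  shows "F = G"
proof (intro ext)
  fix u v
  have "(\<lambda>u. F u (Poly_Mapping.single j 1)) = (\<lambda>u. G u (Poly_Mapping.single j 1))" for j
    using assms by (intro lin_map_eqI) (auto simp: bilin_map_def)
  then have "F u = G u"
    using assms by (intro lin_map_eqI) (auto simp: bilin_map_def dest: fun_cong)
  then show "F u v = G u v"
    by simp
qed

lemma lin_map_eq_on_tensors:
  assumes "lin_map f" "lin_map g" "\<And>x y. f (tensor x y) = g (tensor x y)"
  shows "f = g"
  using assms(1,2)
proof (rule lin_map_eqI)
  fix k :: "'a \<times> 'b"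
  obtain i j where "k = (i, j)"
    by fastforce
  then show "f (Poly_Mapping.single k 1) = g (Poly_Mapping.single k 1)"
    using assms(3) by (simp add: single_pair_eq_tensor)
qed

lemma bilin_map_eq_on_tensors:
  assumes "bilin_map F" "bilin_map G"
    and "\<And>x1 x2 y1 y2. F (tensor x1 x2) (tensor y1 y2) = G (tensor x1 x2) (tensor y1 y2)"
  shows "F = G"
proof (intro ext)
  fix u v
  have "F (tensor x1 x2) = G (tensor x1 x2)" for x1 x2
    using assms by (intro lin_map_eq_on_tensors) (auto simp: bilin_map_def)
  then have "(\<lambda>u. F u v) = (\<lambda>u. G u v)"
    using assms by (intro lin_map_eq_on_tensors) (auto simp: bilin_map_def)
  then show "F u v = G u v"
    by meson
qed

lemma trilin_map_eq_on_tensors: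
  assumes "trilin_map F" "trilin_map G"
    and "\<And>x1 x2 y1 y2 z1 z2. F (tensor x1 x2) (tensor y1 y2) (tensor z1 z2)
      = G (tensor x1 x2) (tensor y1 y2) (tensor z1 z2)"
  shows "F = G"
proof (intro ext)
  fix u v w
  have "F (tensor x1 x2) (tensor y1 y2) = G (tensor x1 x2) (tensor y1 y2)" for x1 x2 y1 y2
    using assms by (intro lin_map_eq_on_tensors) (auto simp: trilin_map_def)
  then have "(\<lambda>v. F (tensor x1 x2) v w) = (\<lambda>v. G (tensor x1 x2) v w)" for x1 x2
    using assms by (intro lin_map_eq_on_tensors) (auto simp: trilin_map_def)
  then have "(\<lambda>u. F u v w) = (\<lambda>u. G u v w)"
    using assms by (intro lin_map_eq_on_tensors) (auto simp: trilin_map_def dest: fun_cong)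
  then show "F u v w = G u v w"
    by meson
qed

lemma lin_ext_tensor:
  assumes "bilin_map G"
  shows "lin_ext (\<lambda>(i, j). G (Poly_Mapping.single i 1) (Poly_Mapping.single j 1)) (tensor u v) = G u v"
proof -
  let ?F = "\<lambda>u v. lin_ext (\<lambda>(i, j). G (Poly_Mapping.single i 1) (Poly_Mapping.single j 1)) (tensor u v)"
  have "bilin_map ?F"
    unfolding bilin_map_def
    by (auto intro!: lin_mapI simp: lin_map_add[OF lin_map_lin_ext] lin_map_smult[OF lin_map_lin_ext]
        tensor_linear)
  then have "?F = G"
    using assms by (rule bilin_map_eqI) (simp add: single_pair_eq_tensor[symmetric])
  then show ?thesis
    by (rule fun_cong[OF fun_cong])
qed

lemma reindex_eq_lin_ext: "reindex g = lin_ext (\<lambda>i. Poly_Mapping.single (g i) 1)"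
proof
  fix v
  have "Poly_Mapping.single (g i) c = smult c (Poly_Mapping.single (g i) 1)" for i c
    by (rule poly_mapping_eqI) (simp add: lookup_single when_def)
  then show "reindex g v = lin_ext (\<lambda>i. Poly_Mapping.single (g i) 1) v"
    unfolding reindex_def lin_ext_def by (intro sum.cong refl)
qed

lemma lookup_reindex:
  assumes "inj g"
  shows "Poly_Mapping.lookup (reindex g v) (g i) = Poly_Mapping.lookup v i"
proof -
  have "Poly_Mapping.lookup (reindex g v) (g i)
      = (\<Sum>t\<in>Poly_Mapping.keys v. if t = i then Poly_Mapping.lookup v t else 0)"
    unfolding reindex_def lookup_sum
    by (intro sum.cong) (auto simp: lookup_single when_def dest: injD[OF assms])
  then show ?thesis
    by (simp add: in_keys_iff)
qed

lemma reindex_assoc_tensor: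
  "reindex (\<lambda>((a, b), c). (a, b, c)) (tensor (tensor x y) z) = tensor x (tensor y z)"
proof (rule poly_mapping_eqI)
  fix k :: "'a \<times> 'b \<times> 'c"
  obtain a b c where k: "k = (\<lambda>((a, b), c). (a, b, c)) ((a, b), c)"
    by (cases k) auto
  have "inj (\<lambda>((a::'a, b::'b), c::'c). (a, b, c))"
    by (auto simp: inj_def)
  then show "Poly_Mapping.lookup (reindex (\<lambda>((a, b), c). (a, b, c)) (tensor (tensor x y) z)) k
      = Poly_Mapping.lookup (tensor x (tensor y z)) k"
    unfolding k by (simp only: lookup_reindex) (simp add: mult.assoc)
qed

lemma lin_map_reindex: "lin_map (reindex g)"
  by (simp add: reindex_eq_lin_ext lin_map_lin_ext)

lemma R_Id_eq_lin_ext: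
  "R_Id R = lin_ext (\<lambda>(p, q, r). reindex (\<lambda>((a, b), c). (a, b, c))
      (tensor (R (Poly_Mapping.single (p, q) 1)) (Poly_Mapping.single r 1)))"
  unfolding R_Id_def lin_ext_def by (intro ext sum.cong) auto

lemma Id_R_eq_lin_ext:
  "Id_R R = lin_ext (\<lambda>(p, q, r). tensor (Poly_Mapping.single p 1) (R (Poly_Mapping.single (q, r) 1)))"
  unfolding Id_R_def lin_ext_def by (intro ext sum.cong) auto

lemma lin_map_R_Id: "lin_map (R_Id R)"
  by (simp add: R_Id_eq_lin_ext lin_map_lin_ext)

lemma lin_map_Id_R: "lin_map (Id_R R)"
  by (simp add: Id_R_eq_lin_ext lin_map_lin_ext)

lemma Id_R_tensor:
  fixes R :: "('a \<times> 'a \<Rightarrow>\<^sub>0 'k::field) \<Rightarrow> ('a \<times> 'a \<Rightarrow>\<^sub>0 'k)"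
  assumes "lin_map R"
  shows "Id_R R (tensor x w) = tensor x (R w)"
proof -
  have "(\<lambda>x w. Id_R R (tensor x w)) = (\<lambda>x w. tensor x (R w))"
  proof (rule bilin_map_eqI)
    show "bilin_map (\<lambda>x w. Id_R R (tensor x w))" "bilin_map (\<lambda>x w. tensor x (R w))"
      unfolding bilin_map_def
      by (auto intro!: lin_mapI simp: lin_map_add[OF lin_map_Id_R] lin_map_smult[OF lin_map_Id_R]
          lin_map_add[OF assms] lin_map_smult[OF assms] tensor_linear)
  next
    fix i :: 'a and j :: "'a \<times> 'a"
    obtain q r where "j = (q, r)"
      by fastforce
    then show "Id_R R (tensor (Poly_Mapping.single i 1) (Poly_Mapping.single j 1))
        = tensor (Poly_Mapping.single i 1) (R (Poly_Mapping.single j 1))"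
      by (simp add: Id_R_eq_lin_ext single_pair_eq_tensor[symmetric])
  qed
  then show ?thesis
    by (rule fun_cong[OF fun_cong])
qed

lemma R_Id_tensor:
  fixes R :: "('a \<times> 'a \<Rightarrow>\<^sub>0 'k::field) \<Rightarrow> ('a \<times> 'a \<Rightarrow>\<^sub>0 'k)"
  assumes "lin_map R"
  shows "R_Id R (tensor x (tensor y z)) = reindex (\<lambda>((a, b), c). (a, b, c)) (tensor (R (tensor x y)) z)"
proof -
  let ?assoc = "reindex (\<lambda>((a::'a, b::'a), c::'a). (a, b, c)) :: _ \<Rightarrow> 'a \<times> 'a \<times> 'a \<Rightarrow>\<^sub>0 'k"
  have "(\<lambda>w z. R_Id R (?assoc (tensor w z))) = (\<lambda>w z. ?assoc (tensor (R w) z))"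
  proof (rule bilin_map_eqI)
    show "bilin_map (\<lambda>w z. R_Id R (?assoc (tensor w z)))" "bilin_map (\<lambda>w z. ?assoc (tensor (R w) z))"
      unfolding bilin_map_def
      by (auto intro!: lin_mapI simp: lin_map_add[OF lin_map_R_Id] lin_map_smult[OF lin_map_R_Id]
          lin_map_add[OF lin_map_reindex] lin_map_smult[OF lin_map_reindex]
          lin_map_add[OF assms] lin_map_smult[OF assms] tensor_linear)
  next
    fix i :: "'a \<times> 'a" and j :: 'a
    obtain p q where "i = (p, q)"
      by fastforce
    then show "R_Id R (?assoc (tensor (Poly_Mapping.single i 1) (Poly_Mapping.single j 1)))
        = ?assoc (tensor (R (Poly_Mapping.single i 1)) (Poly_Mapping.single j 1))"
      by (simp add: R_Id_eq_lin_ext reindex_eq_lin_ext single_pair_eq_tensor[symmetric])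
  qed
  then have "R_Id R (?assoc (tensor (tensor x y) z)) = ?assoc (tensor (R (tensor x y)) z)"
    by (rule fun_cong[OF fun_cong])
  then show ?thesis
    by (simp only: reindex_assoc_tensor)
qed

lemma central_leibniz_tensor_square:
  fixes T :: "('a \<Rightarrow>\<^sub>0 'k::field) \<Rightarrow> ('a \<Rightarrow>\<^sub>0 'k) \<Rightarrow> ('a \<Rightarrow>\<^sub>0 'k) \<Rightarrow> ('a \<Rightarrow>\<^sub>0 'k)"
    and B :: "('a \<times> 'a \<Rightarrow>\<^sub>0 'k) \<Rightarrow> ('a \<times> 'a \<Rightarrow>\<^sub>0 'k) \<Rightarrow> ('a \<times> 'a \<Rightarrow>\<^sub>0 'k)"
  assumes T: "central_3leibniz T one"
    and B: "bilin_map B"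
    and B_tensor: "\<And>x1 x2 y1 y2. B (tensor x1 x2) (tensor y1 y2) = tensor (T x1 y1 y2) x2 + tensor x1 (T x2 y1 y2)"
  shows "central_leibniz B (tensor one one)"
proof -
  have T_leibniz: "\<And>x1 x2 x3 y1 y2. T (T x1 x2 x3) y1 y2
      = T (T x1 y1 y2) x2 x3 + T x1 (T x2 y1 y2) x3 + T x1 x2 (T x3 y1 y2)"
    and T_one: "\<And>x y. T one x y = 0" "\<And>x y. T x one y = 0" "\<And>x y. T x y one = 0"
    using T unfolding central_3leibniz_def by blast+
  have zero: "lin_map (\<lambda>_. 0 :: 'a \<times> 'a \<Rightarrow>\<^sub>0 'k)"
    by (rule lin_mapI) simp_all
  have "B (tensor one one) = (\<lambda>_. 0)"
    using B zero by (intro lin_map_eq_on_tensors) (simp_all add: bilin_map_def B_tensor T_one)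
  moreover have "(\<lambda>u. B u (tensor one one)) = (\<lambda>_. 0)"
    using B zero by (intro lin_map_eq_on_tensors) (simp_all add: bilin_map_def B_tensor T_one)
  moreover have "(\<lambda>x y z. B (B x y) z) = (\<lambda>x y z. B (B x z) y + B x (B y z))"
  proof (rule trilin_map_eq_on_tensors)
    show "trilin_map (\<lambda>x y z. B (B x y) z)" "trilin_map (\<lambda>x y z. B (B x z) y + B x (B y z))"
      unfolding trilin_map_def by (auto intro!: lin_mapI simp: bilin_mapD[OF B] smult_add_right)
  next
    fix x1 x2 y1 y2 z1 z2
    show "B (B (tensor x1 x2) (tensor y1 y2)) (tensor z1 z2)
        = B (B (tensor x1 x2) (tensor z1 z2)) (tensor y1 y2) + B (tensor x1 x2) (B (tensor y1 y2) (tensor z1 z2))"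
      by (simp only: B_tensor bilin_mapD[OF B] tensor_add_left tensor_add_right
          T_leibniz[of x1 y1 y2 z1 z2] T_leibniz[of x2 y1 y2 z1 z2]) (simp only: add_ac)
  qed
  ultimately show ?thesis
    using B unfolding central_leibniz_def by meson
qed

lemma braiding_bij:
  fixes B :: "('b \<Rightarrow>\<^sub>0 'k::field) \<Rightarrow> ('b \<Rightarrow>\<^sub>0 'k) \<Rightarrow> ('b \<Rightarrow>\<^sub>0 'k)"
    and R :: "('b \<times> 'b \<Rightarrow>\<^sub>0 'k) \<Rightarrow> ('b \<times> 'b \<Rightarrow>\<^sub>0 'k)"
  assumes B: "bilin_map B" and B_e: "\<And>u. B u e = 0"
    and R: "lin_map R" and R_tensor: "\<And>u v. R (tensor u v) = tensor v u + tensor e (B u v)"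
  shows "bij R"
proof -
  define S where "S = lin_ext (\<lambda>(i, j). tensor (Poly_Mapping.single j 1) (Poly_Mapping.single i 1)
    - tensor (B (Poly_Mapping.single j 1) (Poly_Mapping.single i 1)) e)"
  have "bilin_map (\<lambda>u v. tensor v u - tensor (B v u) e)"
    unfolding bilin_map_def
    by (auto intro!: lin_mapI simp: bilin_mapD[OF B] tensor_linear tensor_diff_left smult_add_right smult_diff_right)
  then have S_tensor: "S (tensor u v) = tensor v u - tensor (B v u) e" for u v
    using lin_ext_tensor[of "\<lambda>u v. tensor v u - tensor (B v u) e"] by (simp add: S_def)
  have S: "lin_map S"
    by (simp add: S_def lin_map_lin_ext)
  have "S \<circ> R = id"
    by (rule lin_map_eq_on_tensors)
      (simp_all add: lin_map_comp lin_map_id S R R_tensor lin_map_add[OF S] S_tensor B_e)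
  moreover have "R \<circ> S = id"
    by (rule lin_map_eq_on_tensors)
      (simp_all add: lin_map_comp lin_map_id S R R_tensor lin_map_diff[OF R] S_tensor B_e)
  ultimately show ?thesis
    by (rule o_bij)
qed

lemma braiding_braid_relation:
  fixes B :: "('b \<Rightarrow>\<^sub>0 'k::field) \<Rightarrow> ('b \<Rightarrow>\<^sub>0 'k) \<Rightarrow> ('b \<Rightarrow>\<^sub>0 'k)"
    and R :: "('b \<times> 'b \<Rightarrow>\<^sub>0 'k) \<Rightarrow> ('b \<times> 'b \<Rightarrow>\<^sub>0 'k)"
  assumes B: "central_leibniz B e"
    and R: "lin_map R" and R_tensor: "\<And>u v. R (tensor u v) = tensor v u + tensor e (B u v)"
  shows "R_Id R \<circ> Id_R R \<circ> R_Id R = Id_R R \<circ> R_Id R \<circ> Id_R R"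
proof -
  have B_leibniz: "\<And>x y z. B (B x y) z = B (B x z) y + B x (B y z)"
    and B_e: "\<And>u. B e u = 0" "\<And>u. B u e = 0"
    using B unfolding central_leibniz_def by blast+
  have R_Id_pure: "R_Id R (tensor x (tensor y z)) = tensor y (tensor x z) + tensor e (tensor (B x y) z)" for x y z
    by (simp add: R_Id_tensor[OF R] R_tensor tensor_add_left lin_map_add[OF lin_map_reindex] reindex_assoc_tensor)
  have Id_R_pure: "Id_R R (tensor x (tensor y z)) = tensor x (tensor z y) + tensor x (tensor e (B y z))" for x y z
    by (simp add: Id_R_tensor[OF R] R_tensor tensor_add_right)
  have braid_pure: "R_Id R (Id_R R (R_Id R (tensor x (tensor y z))))
      = Id_R R (R_Id R (Id_R R (tensor x (tensor y z))))" for x y z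
    by (simp only: R_Id_pure Id_R_pure lin_map_add[OF lin_map_R_Id] lin_map_add[OF lin_map_Id_R]
        tensor_add_left tensor_add_right B_e tensor_zero add_0_left add_0_right B_leibniz[of x y z])
      (simp only: add_ac)
  show ?thesis
  proof (rule lin_map_eqI)
    show "lin_map (R_Id R \<circ> Id_R R \<circ> R_Id R)" "lin_map (Id_R R \<circ> R_Id R \<circ> Id_R R)"
      by (simp_all add: lin_map_comp lin_map_R_Id lin_map_Id_R)
  next
    fix i :: "'b \<times> 'b \<times> 'b"
    obtain p q r where "i = (p, q, r)"
      by (cases i) auto
    then show "(R_Id R \<circ> Id_R R \<circ> R_Id R) (Poly_Mapping.single i 1) = (Id_R R \<circ> R_Id R \<circ> Id_R R) (Poly_Mapping.single i 1)"
      using braid_pure by (simp add: single_pair_eq_tensor)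
  qed
qed

lemma YBE_solution_of_central_leibniz:
  assumes B: "central_leibniz B e"
    and R: "lin_map R" and R_tensor: "\<And>u v. R (tensor u v) = tensor v u + tensor e (B u v)"
  shows "YBE_solution R"
proof -
  have "bilin_map B" "\<And>u. B u e = 0"
    using B unfolding central_leibniz_def by blast+
  then have "bij R"
    using R R_tensor by (rule braiding_bij)
  then show ?thesis
    unfolding YBE_solution_def using R braiding_braid_relation[OF B R R_tensor] by blast
qed

theorem theorem5p5:
  fixes T :: "('a \<Rightarrow>\<^sub>0 'k::field) \<Rightarrow> ('a \<Rightarrow>\<^sub>0 'k) \<Rightarrow> ('a \<Rightarrow>\<^sub>0 'k) \<Rightarrow> ('a \<Rightarrow>\<^sub>0 'k)"
    and one :: "'a \<Rightarrow>\<^sub>0 'k"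
    and B :: "('a \<times> 'a \<Rightarrow>\<^sub>0 'k) \<Rightarrow> ('a \<times> 'a \<Rightarrow>\<^sub>0 'k) \<Rightarrow> ('a \<times> 'a \<Rightarrow>\<^sub>0 'k)"
    and R :: "(('a \<times> 'a) \<times> ('a \<times> 'a) \<Rightarrow>\<^sub>0 'k) \<Rightarrow> (('a \<times> 'a) \<times> ('a \<times> 'a) \<Rightarrow>\<^sub>0 'k)"
  assumes L: "central_3leibniz T one"
    and B_bilin: "bilin_map B"
    and B_def: "\<And>x1 x2 y1 y2. B (tensor x1 x2) (tensor y1 y2)
                   = tensor (T x1 y1 y2) x2 + tensor x1 (T x2 y1 y2)"
    and R_lin: "lin_map R"
    and R_def: "\<And>x1 x2 y1 y2. R (tensor (tensor x1 x2) (tensor y1 y2))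
                   = tensor (tensor y1 y2) (tensor x1 x2)
                     + tensor (tensor one one) (tensor (T x1 y1 y2) x2)
                     + tensor (tensor one one) (tensor x1 (T x2 y1 y2))"
  shows "central_leibniz B (tensor one one) \<and> YBE_solution R"
proof -
  let ?e = "tensor one one"
  have "central_leibniz B ?e"
    using L B_bilin B_def by (rule central_leibniz_tensor_square)
  moreover have "(\<lambda>u v. R (tensor u v)) = (\<lambda>u v. tensor v u + tensor ?e (B u v))"
  proof (rule bilin_map_eq_on_tensors)
    show "bilin_map (\<lambda>u v. R (tensor u v))" "bilin_map (\<lambda>u v. tensor v u + tensor ?e (B u v))"
      unfolding bilin_map_def
      by (auto intro!: lin_mapI simp: lin_map_add[OF R_lin] lin_map_smult[OF R_lin] bilin_mapD[OF B_bilin]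
          tensor_linear smult_add_right add_ac)
  qed (simp add: R_def B_def tensor_add_right add.assoc)
  then have "R (tensor u v) = tensor v u + tensor ?e (B u v)" for u v
    by (rule fun_cong[OF fun_cong])
  ultimately show ?thesis
    using R_lin YBE_solution_of_central_leibniz by blast
qed

end
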